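(* Let $r,k$ be positive integers. The number of $r$-proper permutations $\pi\colon[k]\to[k]$ is at most $2^{(r+\log r)k}$.
   Context: $[k]=\{1,\dots,k\}$. A permutation $\pi\colon[k]\to[k]$ is called $r$-proper if for every $j\in[k]$, $|\{\ell\in[k]:\ \ell\le j,\ \pi(\ell)\ge j-1\}|\le r$. $\log$ is base $2$. *)

theory Defs
  imports Complex_Main "HOL-Combinatorics.Permutations"
begin

definition r_proper :: "nat \<Rightarrow> nat \<Rightarrow> (nat \<Rightarrow> nat) \<Rightarrow> bool" where
  "r_proper r k \<pi> \<longleftrightarrow>
     (\<forall>j\<in>{1..k}. card {l\<in>{1..k}. l \<le> j \<and> int (\<pi> l) \<ge> int j - 1} \<le> r)"

end

theory Submission
  imports Defs
begin

(* Encode an r-proper permutation \<pi> of [k] step by step. At step t let U be the set of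
   positions l \<le> t with \<pi> l \<ge> t - 1 (so |U| \<le> r by properness) and W the set of values in
   [t - 2] not taken by \<pi> on [t - 1]; counting shows |W| < |U|. Record which element of U
   is mapped to t - 1 (a subset of [r], via ranks in U) and the rank of \<pi> t in W when
   \<pi> t \<le> t - 2 (0 otherwise): at most 2^r * r choices. The values min (\<pi> l) (t - 1) for
   l < t determine W; together with the step-t code they determine U and then
   min (\<pi> l) t for l \<le> t. By induction the k codes determine \<pi>, and
   (2^r * r)^k = 2^((r + log r) k). *)

definition rank :: "'a::linorder set \<Rightarrow> 'a \<Rightarrow> nat" where
  "rank A x = card {a\<in>A. a \<le> x}"

lemma strict_mono_on_rank:
  assumes "finite A"
  shows "strict_mono_on A (rank A)"
proof (rule strict_mono_onI)
  fix x y assume "x \<in> A" "y \<in> A" "x < y"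
  then have "{a\<in>A. a \<le> x} \<subseteq> {a\<in>A. a \<le> y}" "y \<notin> {a\<in>A. a \<le> x}"
    by auto
  with \<open>y \<in> A\<close> have "{a\<in>A. a \<le> x} \<subset> {a\<in>A. a \<le> y}" by blast
  then show "rank A x < rank A y"
    unfolding rank_def using assms by (intro psubset_card_mono) auto
qed

lemma inj_on_rank: "finite A \<Longrightarrow> inj_on (rank A) A"
  by (rule strict_mono_on_imp_inj_on) (rule strict_mono_on_rank)

lemma rank_in_atLeastAtMost:
  assumes "finite A" "x \<in> A"
  shows "rank A x \<in> {1..card A}"
proof -
  have "0 < rank A x"
    unfolding rank_def using assms by (subst card_gt_0_iff) auto
  moreover have "rank A x \<le> card A"
    unfolding rank_def using assms(1) by (intro card_mono) auto
  ultimately show ?thesis by simp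
qed

definition unused_values :: "(nat \<Rightarrow> nat) \<Rightarrow> nat \<Rightarrow> nat set" where
  "unused_values \<pi> t = {1..t-2} - \<pi> ` {1..t-1}"

definition late_positions :: "(nat \<Rightarrow> nat) \<Rightarrow> nat \<Rightarrow> nat set" where
  "late_positions \<pi> t = {l\<in>{1..t}. t \<le> \<pi> l + 1}"

definition back_code :: "(nat \<Rightarrow> nat) \<Rightarrow> nat \<Rightarrow> nat" where
  "back_code \<pi> t = (if \<pi> t + 2 \<le> t then rank (unused_values \<pi> t) (\<pi> t) else 0)"

(* A set with at most one element; using a set avoids a choice operator. *)
definition preimage_code :: "(nat \<Rightarrow> nat) \<Rightarrow> nat \<Rightarrow> nat set" where
  "preimage_code \<pi> t = rank (late_positions \<pi> t) ` {l\<in>{1..t}. \<pi> l + 1 = t}"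

definition truncations_agree :: "(nat \<Rightarrow> nat) \<Rightarrow> (nat \<Rightarrow> nat) \<Rightarrow> nat \<Rightarrow> bool" where
  "truncations_agree p q t \<longleftrightarrow> (\<forall>l\<in>{1..t}. min (p l) t = min (q l) t)"

definition step_code :: "(nat \<Rightarrow> nat) \<Rightarrow> nat \<Rightarrow> nat set \<times> nat" where
  "step_code \<pi> t = (preimage_code \<pi> t, back_code \<pi> t)"

lemma finite_unused_values: "finite (unused_values \<pi> t)"
  by (simp add: unused_values_def)

lemma finite_late_positions: "finite (late_positions \<pi> t)"
  by (simp add: late_positions_def)

lemma card_late_positions_le:
  assumes "r_proper r k \<pi>" "t \<in> {1..k}"
  shows "card (late_positions \<pi> t) \<le> r"
proof -
  have "late_positions \<pi> t = {l\<in>{1..k}. l \<le> t \<and> int (\<pi> l) \<ge> int t - 1}"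
    using assms(2) unfolding late_positions_def by auto
  then show ?thesis using assms unfolding r_proper_def by auto
qed

lemma back_value_in_unused_values:
  assumes p: "\<pi> permutes {1..k}" and t: "t \<in> {1..k}" and early: "\<pi> t + 2 \<le> t"
  shows "\<pi> t \<in> unused_values \<pi> t"
proof -
  have "\<pi> t \<in> {1..k}" using t by (rule permutes_in_image[OF p, THEN iffD2])
  moreover have "\<pi> t \<notin> \<pi> ` {1..t-1}"
  proof
    assume "\<pi> t \<in> \<pi> ` {1..t-1}"
    then obtain l where l: "l \<in> {1..t-1}" "\<pi> t = \<pi> l" by blast
    then have "t = l" using permutes_inj[OF p] by (simp add: inj_eq)
    moreover have "1 \<le> l" "l \<le> t - 1" using l(1) by auto
    ultimately show False by linarith
  qed
  ultimately show ?thesis using early unfolding unused_values_def by auto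
qed

lemma back_code_eq_0_iff:
  assumes "\<pi> permutes {1..k}" "t \<in> {1..k}"
  shows "back_code \<pi> t = 0 \<longleftrightarrow> t \<le> \<pi> t + 1"
proof (cases "\<pi> t + 2 \<le> t")
  case True
  then have "rank (unused_values \<pi> t) (\<pi> t) \<in> {1..card (unused_values \<pi> t)}"
    by (intro rank_in_atLeastAtMost finite_unused_values back_value_in_unused_values[OF assms])
  then show ?thesis using True by (simp add: back_code_def)
next
  case False
  then show ?thesis by (simp add: back_code_def)
qed

lemma card_unused_values_less:
  assumes p: "\<pi> permutes {1..k}" and t: "t \<in> {1..k}"
  shows "card (unused_values \<pi> t) < card (late_positions \<pi> t)"
proof (cases "t = 1")
  case True
  then have "unused_values \<pi> t = {}" "t \<in> late_positions \<pi> t"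
    by (auto simp: unused_values_def late_positions_def)
  then show ?thesis using finite_late_positions card_gt_0_iff by fastforce
next
  case False
  let ?early = "{l\<in>{1..t-1}. \<pi> l + 2 \<le> t}"
  let ?late = "{l\<in>{1..t-1}. t \<le> \<pi> l + 1}"
  have "inj_on \<pi> ?early"
    using permutes_inj[OF p] by (rule inj_on_subset) simp
  then have "card ?early = card (\<pi> ` ?early)" by (rule card_image[symmetric])
  also have "\<pi> ` ?early = {1..t-2} - unused_values \<pi> t"
  proof
    show "\<pi> ` ?early \<subseteq> {1..t-2} - unused_values \<pi> t"
    proof
      fix v assume "v \<in> \<pi> ` ?early"
      then obtain l where l: "l \<in> ?early" "v = \<pi> l" by blast
      have "l \<in> {1..k}" using l(1) t by auto
      then have "\<pi> l \<in> {1..k}" by (rule permutes_in_image[OF p, THEN iffD2])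
      then show "v \<in> {1..t-2} - unused_values \<pi> t"
        using l by (auto simp: unused_values_def)
    qed
    show "{1..t-2} - unused_values \<pi> t \<subseteq> \<pi> ` ?early"
    proof
      fix v assume "v \<in> {1..t-2} - unused_values \<pi> t"
      then obtain l where "l \<in> {1..t-1}" "\<pi> l = v" "v \<le> t - 2"
        unfolding unused_values_def by auto
      then have "l \<in> ?early" using False by auto
      then show "v \<in> \<pi> ` ?early" using \<open>\<pi> l = v\<close> by blast
    qed
  qed
  also have "card ({1..t-2} - unused_values \<pi> t) = (t - 2) - card (unused_values \<pi> t)"
    by (subst card_Diff_subset) (auto simp: unused_values_def)
  finally have "card ?early = (t - 2) - card (unused_values \<pi> t)" .
  moreover have "card ?late = (t - 1) - card ?early"
  proof -
    have "?late = {1..t-1} - ?early" by auto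
    moreover have "card ({1..t-1} - ?early) = card {1..t-1} - card ?early"
      by (rule card_Diff_subset) auto
    ultimately show ?thesis by simp
  qed
  moreover have "card (unused_values \<pi> t) \<le> t - 2"
    using card_mono[of "{1..t-2}" "unused_values \<pi> t"] by (simp add: unused_values_def)
  moreover have "card ?late \<le> card (late_positions \<pi> t)"
    by (intro card_mono finite_late_positions) (auto simp: late_positions_def)
  moreover have "2 \<le> t" using False t by simp
  ultimately show ?thesis by linarith
qed

lemma unused_values_eq:
  assumes prev: "truncations_agree p q (t - 1)"
  shows "unused_values p t = unused_values q t"
proof -
  have agree: "p l = v \<longleftrightarrow> q l = v" if "l \<in> {1..t-1}" "v \<le> t - 2" for l v
  proof -
    have "min (p l) (t-1) = min (q l) (t-1)" using prev that(1) by (simp add: truncations_agree_def)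
    then show ?thesis using that by (auto simp: min_def split: if_splits)
  qed
  have "v \<in> p ` {1..t-1} \<longleftrightarrow> v \<in> q ` {1..t-1}" if "v \<in> {1..t-2}" for v
  proof -
    have "v \<le> t - 2" using that by simp
    from agree[OF _ this] show ?thesis by force
  qed
  then show ?thesis unfolding unused_values_def by blast
qed

lemma late_positions_eq:
  assumes p: "p permutes {1..k}" and q: "q permutes {1..k}" and t: "t \<in> {1..k}"
    and back_eq: "back_code p t = back_code q t"
    and prev: "truncations_agree p q (t - 1)"
  shows "late_positions p t = late_positions q t"
proof -
  have "t \<le> p l + 1 \<longleftrightarrow> t \<le> q l + 1" if l: "l \<in> {1..t}" for l
  proof (cases "l = t")
    case True
    then show ?thesis
      using back_code_eq_0_iff[OF p t] back_code_eq_0_iff[OF q t] back_eq by simp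
  next
    case False
    then have "min (p l) (t-1) = min (q l) (t-1)" using prev l by (auto simp: truncations_agree_def)
    then show ?thesis by (auto simp: min_def split: if_splits)
  qed
  then show ?thesis unfolding late_positions_def by auto
qed

lemma preimages_eq:
  assumes p: "p permutes {1..k}" and q: "q permutes {1..k}" and t: "t \<in> {1..k}"
    and code: "step_code p t = step_code q t"
    and prev: "truncations_agree p q (t - 1)"
  shows "{l\<in>{1..t}. p l + 1 = t} = {l\<in>{1..t}. q l + 1 = t}"
proof -
  let ?U = "late_positions p t"
  have U: "late_positions q t = ?U"
    using late_positions_eq[OF p q t _ prev] code by (simp add: step_code_def)
  have "rank ?U ` {l\<in>{1..t}. p l + 1 = t} = rank ?U ` {l\<in>{1..t}. q l + 1 = t}"
    using code U by (simp add: step_code_def preimage_code_def)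
  moreover have "{l\<in>{1..t}. p l + 1 = t} \<subseteq> ?U" "{l\<in>{1..t}. q l + 1 = t} \<subseteq> ?U"
    using U by (auto simp: late_positions_def)
  ultimately show ?thesis
    using inj_on_image_eq_iff[OF inj_on_rank[OF finite_late_positions]] by blast
qed

lemma early_value_eq:
  assumes p: "p permutes {1..k}" and q: "q permutes {1..k}" and t: "t \<in> {1..k}"
    and code: "step_code p t = step_code q t"
    and prev: "truncations_agree p q (t - 1)"
    and l: "l \<in> {1..t}" and early: "p l + 2 \<le> t"
  shows "q l = p l"
proof (cases "l = t")
  case True
  let ?W = "unused_values p t"
  have back_eq: "back_code p t = back_code q t" using code by (simp add: step_code_def)
  then have "q t + 2 \<le> t"
    using back_code_eq_0_iff[OF p t] back_code_eq_0_iff[OF q t] early True by auto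
  moreover have W: "unused_values q t = ?W" using unused_values_eq[OF prev] by simp
  ultimately have "rank ?W (q t) = rank ?W (p t)" and "q t \<in> ?W" "p t \<in> ?W"
    using back_eq early True back_value_in_unused_values[OF p t] back_value_in_unused_values[OF q t]
    by (auto simp: back_code_def)
  then show ?thesis
    using True inj_on_rank[OF finite_unused_values] by (auto dest: inj_onD)
next
  case False
  then have "min (p l) (t-1) = min (q l) (t-1)" using prev l by (auto simp: truncations_agree_def)
  then show ?thesis using early by (auto simp: min_def split: if_splits)
qed

lemma truncations_agree_step:
  assumes p: "p permutes {1..k}" and q: "q permutes {1..k}" and t: "t \<in> {1..k}"
    and code: "step_code p t = step_code q t"
    and prev: "truncations_agree p q (t - 1)"
  shows "truncations_agree p q t"
  unfolding truncations_agree_def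
proof
  fix l assume l: "l \<in> {1..t}"
  consider "p l + 2 \<le> t" | "q l + 2 \<le> t" | "t \<le> p l + 1" "t \<le> q l + 1" by linarith
  then show "min (p l) t = min (q l) t"
  proof cases
    case 1
    then show ?thesis using early_value_eq[OF p q t code prev l] by simp
  next
    case 2
    have "truncations_agree q p (t - 1)" using prev by (simp add: truncations_agree_def)
    then show ?thesis using early_value_eq[OF q p t code[symmetric] _ l] 2 by simp
  next
    case 3
    have "p l + 1 = t \<longleftrightarrow> q l + 1 = t" using preimages_eq[OF p q t code prev] l by blast
    then show ?thesis using 3 by (auto simp: min_def)
  qed
qed

lemma inj_on_step_codes:
  "inj_on (\<lambda>\<pi>. restrict (step_code \<pi>) {1..k}) {\<pi>. \<pi> permutes {1..k}}"
proof (rule inj_onI)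
  fix p q
  assume "p \<in> {\<pi>. \<pi> permutes {1..k}}" "q \<in> {\<pi>. \<pi> permutes {1..k}}"
    and codes: "restrict (step_code p) {1..k} = restrict (step_code q) {1..k}"
  then have p: "p permutes {1..k}" and q: "q permutes {1..k}" by simp_all
  have "truncations_agree p q t" if "t \<le> k" for t
    using that
  proof (induction t)
    case 0
    show ?case by (simp add: truncations_agree_def)
  next
    case (Suc t)
    then have t: "Suc t \<in> {1..k}" and prev: "truncations_agree p q (Suc t - 1)"
      by simp_all
    moreover have "step_code p (Suc t) = step_code q (Suc t)"
      using codes t by (metis restrict_apply')
    ultimately show ?case using truncations_agree_step[OF p q] by blast
  qed
  then have k: "truncations_agree p q k" by simp
  have "p l = q l" if l: "l \<in> {1..k}" for l
  proof -
    have "p l \<in> {1..k}" "q l \<in> {1..k}"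
      using l by (rule permutes_in_image[OF p, THEN iffD2], rule permutes_in_image[OF q, THEN iffD2])
    moreover have "min (p l) k = min (q l) k" using k l by (simp add: truncations_agree_def)
    ultimately show ?thesis by simp
  qed
  then show "p = q" using p q by (metis ext permutes_not_in)
qed

lemma step_code_mem:
  assumes p: "\<pi> permutes {1..k}" and proper: "r_proper r k \<pi>" and t: "t \<in> {1..k}"
  shows "step_code \<pi> t \<in> Pow {1..r} \<times> {0..<r}"
proof -
  let ?U = "late_positions \<pi> t"
  have "preimage_code \<pi> t \<subseteq> {1..card ?U}"
  proof -
    have "{l\<in>{1..t}. \<pi> l + 1 = t} \<subseteq> ?U" by (auto simp: late_positions_def)
    then show ?thesis
      unfolding preimage_code_def using rank_in_atLeastAtMost[OF finite_late_positions] by blast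
  qed
  moreover have "back_code \<pi> t < card ?U"
    using card_unused_values_less[OF p t]
      rank_in_atLeastAtMost[OF finite_unused_values back_value_in_unused_values[OF p t]]
    by (auto simp: back_code_def)
  moreover have "card ?U \<le> r" by (rule card_late_positions_le[OF proper t])
  ultimately show ?thesis by (auto simp: step_code_def)
qed

lemma card_r_proper_permutations_le:
  "card {\<pi>. \<pi> permutes {1..k} \<and> r_proper r k \<pi>} \<le> (2 ^ r * r) ^ k"
proof -
  let ?S = "{\<pi>. \<pi> permutes {1..k} \<and> r_proper r k \<pi>}"
  let ?C = "PiE {1..k} (\<lambda>_. Pow {1..r} \<times> {0..<r})"
  have "inj_on (\<lambda>\<pi>. restrict (step_code \<pi>) {1..k}) ?S"
    by (rule inj_on_subset[OF inj_on_step_codes]) blast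
  moreover have "(\<lambda>\<pi>. restrict (step_code \<pi>) {1..k}) ` ?S \<subseteq> ?C"
    using step_code_mem by auto
  ultimately have "card ?S \<le> card ?C" by (rule card_inj_on_le) (simp add: finite_PiE)
  also have "card ?C = (2 ^ r * r) ^ k" by (simp add: card_PiE card_Pow card_cartesian_product)
  finally show ?thesis .
qed

theorem lemma10:
  fixes r k :: nat
  assumes "r \<ge> 1" and "k \<ge> 1"
  shows "real (card {\<pi>. \<pi> permutes {1..k} \<and> r_proper r k \<pi>})
           \<le> 2 powr ((real r + log 2 (real r)) * real k)"
proof -
  have "real (card {\<pi>. \<pi> permutes {1..k} \<and> r_proper r k \<pi>}) \<le> real ((2 ^ r * r) ^ k)"
    by (simp only: of_nat_le_iff card_r_proper_permutations_le)
  also have "\<dots> = (2 powr (real r + log 2 (real r))) powr real k"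
    using assms(1) by (simp add: powr_add powr_realpow)
  also have "\<dots> = 2 powr ((real r + log 2 (real r)) * real k)"
    by (simp add: powr_powr)
  finally show ?thesis .
qed

end
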